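(* Let $(G,\omega,\mu)$ be an infinite, connected weighted graph, and let $d$ be a pseudo metric on $G$ which is intrinsic, has finite jump size $s$, and such that every ball $B_r(x)$ ($x\in G$, $r>0$) is a finite set. Let $V:G\to\mathbb{R}$ satisfy $c_0:=\inf_G V>0$. Let $u:G\to\mathbb{R}$ be a solution of $$\Delta u - Vu = 0 \quad\text{in } G.$$ Let $p\ge 2$ and $\beta>0$ be such that $$\beta^2 e^{2s\beta} < 2c_0 p .$$ Fix $x_0\in G$ and suppose $u\in \ell^p_{\varphi_\beta}(G,\mu)$, where $\varphi_\beta(x)=e^{-\beta d(x,x_0)}$. Then $u(x)=0$ for all $x\in G$.
   Context: A weighted graph $(G,\omega,\mu)$: $G$ is a countable set, $\mu:G\to(0,\infty)$, and $\omega:G\times G\to[0,\infty)$ satisfies $\omega(x,x)=0$, $\omega(x,y)=\omega(y,x)$, $\sum_{y}\omega(x,y)<\infty$ for all $x$. Write $x\sim y$ iff $\omega(x,y)>0$; the graph is connected if any two vertices are joined by a finite path $x_0\sim x_1\sim\dots\sim x_n$. The Laplacian is $\Delta f(x)=\frac{1}{\mu(x)}\sum_{y\in G}[f(y)-f(x)]\omega(x,y)$ (well defined here since the graph is locally finite under the assumptions). A pseudo metric $d$ on $G$ is a symmetric function $G\times G\to[0,\infty)$ with $d(x,x)=0$ satisfying the triangle inequality (possibly $d(x,y)=0$ for $x\ne y$). Its jump size is $s:=\sup\{d(x,y): x,y\in G,\ \omega(x,y)>0\}$. For $q\ge1$, $C_0>0$, $d$ is $q$-intrinsic with bound $C_0$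 if $\frac{1}{\mu(x)}\sum_{y}\omega(x,y)d^q(x,y)\le C_0$ for all $x\in G$; $d$ is called intrinsic if it is $2$-intrinsic with bound $1$. Balls: $B_r(x_0)=\{x\in G: d(x,x_0)<r\}$. For $\varphi:G\to(0,\infty)$ and $p\in[1,\infty)$, $\ell^p_\varphi(G,\mu)=\{u:G\to\mathbb{R}:\ \sum_{x\in G}|u(x)|^p\varphi(x)\mu(x)<\infty\}$. *)

theory Defs
  imports "HOL-Analysis.Analysis"
begin

text \<open>The vertex set G is the universe of a type 'a (assumed countable).
  Weights w :: 'a => 'a => real, measure mu :: 'a => real.\<close>

definition weighted_graph :: "('a \<Rightarrow> 'a \<Rightarrow> real) \<Rightarrow> ('a \<Rightarrow> real) \<Rightarrow> bool" where
  "weighted_graph w mu \<longleftrightarrow> countable (UNIV :: 'a set) \<and>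
     (\<forall>x. mu x > 0) \<and> (\<forall>x y. w x y \<ge> 0) \<and> (\<forall>x. w x x = 0) \<and>
     (\<forall>x y. w x y = w y x) \<and> (\<forall>x. (\<lambda>y. w x y) summable_on UNIV)"

definition graph_connected :: "('a \<Rightarrow> 'a \<Rightarrow> real) \<Rightarrow> bool" where
  "graph_connected w \<longleftrightarrow> (\<forall>x y. (\<lambda>a b. w a b > 0)\<^sup>*\<^sup>* x y)"

definition laplacian :: "('a \<Rightarrow> 'a \<Rightarrow> real) \<Rightarrow> ('a \<Rightarrow> real) \<Rightarrow> ('a \<Rightarrow> real) \<Rightarrow> 'a \<Rightarrow> real" where
  "laplacian w mu f x = (1 / mu x) * (\<Sum>\<^sub>\<infinity>y. (f y - f x) * w x y)"

definition pseudo_metric :: "('a \<Rightarrow> 'a \<Rightarrow> real) \<Rightarrow> bool" where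
  "pseudo_metric d \<longleftrightarrow> (\<forall>x y. d x y \<ge> 0) \<and> (\<forall>x. d x x = 0) \<and>
     (\<forall>x y. d x y = d y x) \<and> (\<forall>x y z. d x z \<le> d x y + d y z)"

definition jump_size :: "('a \<Rightarrow> 'a \<Rightarrow> real) \<Rightarrow> ('a \<Rightarrow> 'a \<Rightarrow> real) \<Rightarrow> real" where
  "jump_size w d = Sup {d x y | x y. w x y > 0}"

definition finite_jump_size :: "('a \<Rightarrow> 'a \<Rightarrow> real) \<Rightarrow> ('a \<Rightarrow> 'a \<Rightarrow> real) \<Rightarrow> bool" where
  "finite_jump_size w d \<longleftrightarrow> bdd_above {d x y | x y. w x y > 0}"

definition q_intrinsic :: "real \<Rightarrow> real \<Rightarrow> ('a \<Rightarrow> 'a \<Rightarrow> real) \<Rightarrow> ('a \<Rightarrow> real) \<Rightarrow> ('a \<Rightarrow> 'a \<Rightarrow> real) \<Rightarrow> bool" where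
  "q_intrinsic q C0 w mu d \<longleftrightarrow> (\<forall>x. (\<lambda>y. w x y * d x y powr q) summable_on UNIV \<and>
       (1 / mu x) * (\<Sum>\<^sub>\<infinity>y. w x y * d x y powr q) \<le> C0)"

definition intrinsic :: "('a \<Rightarrow> 'a \<Rightarrow> real) \<Rightarrow> ('a \<Rightarrow> real) \<Rightarrow> ('a \<Rightarrow> 'a \<Rightarrow> real) \<Rightarrow> bool" where
  "intrinsic w mu d \<longleftrightarrow> q_intrinsic 2 1 w mu d"

definition ball_d :: "('a \<Rightarrow> 'a \<Rightarrow> real) \<Rightarrow> 'a \<Rightarrow> real \<Rightarrow> 'a set" where
  "ball_d d x0 r = {x. d x x0 < r}"

definition lp_weighted :: "real \<Rightarrow> ('a \<Rightarrow> real) \<Rightarrow> ('a \<Rightarrow> real) \<Rightarrow> ('a \<Rightarrow> real) \<Rightarrow> bool" where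
  "lp_weighted p phi mu u \<longleftrightarrow> (\<lambda>x. \<bar>u x\<bar> powr p * phi x * mu x) summable_on UNIV"

end

theory Submission
  imports Defs "HOL-Real_Asymp.Real_Asymp"
begin

text \<open>
  Put \<open>q = p / 2\<close> and \<open>v = |u|\<^sup>q\<close>. Convexity of \<open>t \<mapsto> |t|\<^sup>q\<close> turns \<open>\<Delta>u = V u\<close> into
  \<open>q c\<^sub>0 v\<^sup>2 \<le> v \<Delta>v\<close> at every vertex. Test this against \<open>\<eta>\<^sup>2 v\<close>, where \<open>\<eta> = max (\<psi> - e\<^sup>-\<^sup>\<beta>\<^sup>R\<^sup>/\<^sup>2) 0\<close>
  is a finitely supported truncation of \<open>\<psi> = exp (- \<beta> d(\<cdot>, x\<^sub>0) / 2)\<close>; summing by parts gives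
  \<open>q c\<^sub>0 \<Sum> \<eta>\<^sup>2 v\<^sup>2 \<mu> \<le> \<onehalf> \<Sum>\<^sub>x\<^sub>,\<^sub>y \<omega>(x,y) v(x)\<^sup>2 (\<eta>(y) - \<eta>(x))\<^sup>2\<close>. Across an edge
  \<open>(\<eta>(y) - \<eta>(x))\<^sup>2 \<le> \<beta>\<^sup>2 e\<^sup>\<beta>\<^sup>s / 4 \<cdot> \<psi>(x)\<^sup>2 d(x,y)\<^sup>2\<close>, so intrinsicness bounds the right-hand side by
  \<open>\<beta>\<^sup>2 e\<^sup>\<beta>\<^sup>s / 8 \<cdot> S\<close> with \<open>S = \<Sum> \<psi>\<^sup>2 v\<^sup>2 \<mu>\<close>, which is finite because \<open>u \<in> \<ell>\<^sup>p\<^sub>\<phi>\<^sub>\<beta>\<close>. Letting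
  \<open>R \<rightarrow> \<infinity>\<close> yields \<open>q c\<^sub>0 S \<le> \<beta>\<^sup>2 e\<^sup>\<beta>\<^sup>s / 8 \<cdot> S\<close>, and the hypothesis on \<open>\<beta>\<close> forces \<open>S = 0\<close>.
\<close>

lemma powr_ge_tangent:
  fixes a t q :: real
  assumes "0 < a" "0 \<le> t" "1 \<le> q"
  shows "q * a powr (q - 1) * (t - a) \<le> t powr q - a powr q"
proof (cases "t = 0")
  case True
  have "a powr q = a powr (q - 1) * a"
    using assms(1) by (simp add: powr_diff)
  then show ?thesis
    using True assms by simp
next
  case False
  then have "t \<in> {0<..}"
    using assms by auto
  then show ?thesis
    using powr_convex[OF assms(3)] assms(1)
    by (intro convex_on_imp_above_tangent[where A = "{0<..}"])
       (auto intro!: derivative_eq_intros simp: interior_open)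
qed

lemma sgn_powr_mult_diff_le:
  fixes a b q :: real
  assumes "1 \<le> q"
  shows "q * (sgn a * \<bar>a\<bar> powr (2 * q - 1)) * (b - a) \<le> \<bar>a\<bar> powr q * (\<bar>b\<bar> powr q - \<bar>a\<bar> powr q)"
proof (cases "a = 0")
  case True
  then show ?thesis by simp
next
  case False
  define A where "A = \<bar>a\<bar>"
  have A: "0 < A"
    using False A_def by simp
  have sgn_diff: "sgn a * (b - a) = sgn a * b - A"
    using False unfolding A_def by (cases "0 < a") (auto simp: algebra_simps)
  have "sgn a * b \<le> \<bar>b\<bar>"
    by (cases "0 < a") (use False in auto)
  then have "q * A powr (q - 1) * (sgn a * b - A) \<le> q * A powr (q - 1) * (\<bar>b\<bar> - A)"
    using assms by (intro mult_left_mono) auto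
  also have "\<dots> \<le> \<bar>b\<bar> powr q - A powr q"
    using powr_ge_tangent[OF A _ assms] by simp
  finally have tangent: "q * A powr (q - 1) * (sgn a * b - A) \<le> \<bar>b\<bar> powr q - A powr q" .
  have "A powr (2 * q - 1) = A powr q * A powr (q - 1)"
    using A by (simp add: powr_add[symmetric])
  then have "q * (sgn a * \<bar>a\<bar> powr (2 * q - 1)) * (b - a)
      = A powr q * (q * A powr (q - 1) * (sgn a * b - A))"
    unfolding A_def[symmetric] sgn_diff[symmetric] by (simp add: algebra_simps)
  also have "\<dots> \<le> A powr q * (\<bar>b\<bar> powr q - A powr q)"
    using tangent by (intro mult_left_mono) auto
  finally show ?thesis
    unfolding A_def .
qed

lemma abs_exp_minus_sub_one_le:
  fixes z :: real
  shows "\<bar>exp (- z) - 1\<bar> \<le> \<bar>z\<bar> * exp \<bar>z\<bar>"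
proof (cases "0 \<le> z")
  case True
  have "1 - z \<le> exp (- z)"
    using exp_ge_add_one_self[of "- z"] by simp
  moreover have "z \<le> z * exp z"
    using True by (simp add: mult_le_cancel_left1)
  ultimately show ?thesis
    using True by simp
next
  case False
  have "1 + z \<le> exp z"
    using exp_ge_add_one_self[of z] by simp
  then have "(1 + z) * exp (- z) \<le> 1"
    by (metis exp_gt_zero exp_minus_inverse mult_right_mono less_imp_le)
  then show ?thesis
    using False by (simp add: algebra_simps)
qed

lemma exp_dist_diff_sq_le:
  fixes d :: "'a \<Rightarrow> 'a \<Rightarrow> real" and \<beta> s :: real
  assumes "pseudo_metric d" "0 \<le> \<beta>" "d x y \<le> s"
  shows "(exp (- \<beta> * d y x0 / 2) - exp (- \<beta> * d x x0 / 2))\<^sup>2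
    \<le> \<beta>\<^sup>2 * exp (\<beta> * s) / 4 * exp (- \<beta> * d x x0) * (d x y)\<^sup>2"
proof -
  define \<psi> where "\<psi> = exp (- \<beta> * d x x0 / 2)"
  define z where "z = \<beta> * (d y x0 - d x x0) / 2"
  have "\<bar>d y x0 - d x x0\<bar> \<le> d x y"
    using assms(1) unfolding pseudo_metric_def by (smt (verit))
  then have z_le: "\<bar>z\<bar> \<le> \<beta> * d x y / 2"
    unfolding z_def using assms(2) by (simp add: abs_mult mult_left_mono)
  moreover have "\<beta> * d x y \<le> \<beta> * s"
    using assms(3,2) by (rule mult_left_mono)
  ultimately have "\<bar>z\<bar> \<le> \<beta> * s / 2"
    by linarith
  then have "\<bar>exp (- z) - 1\<bar> \<le> \<beta> * d x y / 2 * exp (\<beta> * s / 2)"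
    using abs_exp_minus_sub_one_le[of z] z_le
    by (smt (verit) abs_ge_zero exp_ge_zero exp_le_cancel_iff mult_mono)
  moreover have "exp (- \<beta> * d y x0 / 2) - \<psi> = \<psi> * (exp (- z) - 1)"
    unfolding \<psi>_def z_def by (simp add: field_simps flip: exp_add)
  ultimately have abs_diff_le: "\<bar>exp (- \<beta> * d y x0 / 2) - \<psi>\<bar> \<le> \<psi> * (\<beta> * d x y / 2 * exp (\<beta> * s / 2))"
    unfolding \<psi>_def by (simp add: abs_mult mult_left_mono)
  have "(exp (- \<beta> * d y x0 / 2) - \<psi>)\<^sup>2 \<le> (\<psi> * (\<beta> * d x y / 2 * exp (\<beta> * s / 2)))\<^sup>2"
    using power_mono[OF abs_diff_le abs_ge_zero, of 2] by simp
  also have "\<dots> = \<beta>\<^sup>2 * exp (\<beta> * s) / 4 * exp (- \<beta> * d x x0) * (d x y)\<^sup>2"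
    unfolding \<psi>_def by (simp add: power_mult_distrib power2_eq_square field_simps flip: exp_add)
  finally show ?thesis
    unfolding \<psi>_def .
qed

definition exp_cutoff :: "real \<Rightarrow> ('a \<Rightarrow> 'a \<Rightarrow> real) \<Rightarrow> 'a \<Rightarrow> real \<Rightarrow> 'a \<Rightarrow> real" where
  "exp_cutoff \<beta> d x0 R x = max (exp (- \<beta> * d x x0 / 2) - exp (- \<beta> * R / 2)) 0"

lemma exp_cutoff_nonzero_imp_dist_less:
  assumes "0 < \<beta>" "exp_cutoff \<beta> d x0 R x \<noteq> 0"
  shows "d x x0 < R"
proof -
  have "exp (- \<beta> * R / 2) < exp (- \<beta> * d x x0 / 2)"
    using assms(2) unfolding exp_cutoff_def by (auto simp: max_def split: if_splits)
  then show ?thesis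
    using assms(1) by (simp add: field_simps)
qed

lemma exp_cutoff_tendsto:
  assumes "0 < \<beta>"
  shows "((\<lambda>R. exp_cutoff \<beta> d x0 R x) \<longlongrightarrow> exp (- \<beta> * d x x0 / 2)) at_top"
proof -
  have "((\<lambda>R. exp (- \<beta> * R / 2)) \<longlongrightarrow> 0) at_top"
    using assms by real_asymp
  then have "((\<lambda>R. exp_cutoff \<beta> d x0 R x) \<longlongrightarrow> max (exp (- \<beta> * d x x0 / 2) - 0) 0) at_top"
    unfolding exp_cutoff_def by (intro tendsto_max tendsto_diff tendsto_const)
  then show ?thesis
    by simp
qed

lemma exp_cutoff_diff_sq_le:
  assumes "pseudo_metric d" "0 \<le> \<beta>" "d x y \<le> s"
  shows "(exp_cutoff \<beta> d x0 R y - exp_cutoff \<beta> d x0 R x)\<^sup>2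
    \<le> \<beta>\<^sup>2 * exp (\<beta> * s) / 4 * exp (- \<beta> * d x x0) * (d x y)\<^sup>2"
proof -
  have "\<bar>exp_cutoff \<beta> d x0 R y - exp_cutoff \<beta> d x0 R x\<bar>
      \<le> \<bar>exp (- \<beta> * d y x0 / 2) - exp (- \<beta> * d x x0 / 2)\<bar>"
    unfolding exp_cutoff_def by (simp add: max_def)
  then have "(exp_cutoff \<beta> d x0 R y - exp_cutoff \<beta> d x0 R x)\<^sup>2
      \<le> (exp (- \<beta> * d y x0 / 2) - exp (- \<beta> * d x x0 / 2))\<^sup>2"
    by (simp only: abs_le_square_iff)
  then show ?thesis
    using exp_dist_diff_sq_le[OF assms, of x0] by linarith
qed

lemma edge_dist_le_jump_size:
  assumes "finite_jump_size w d" "0 < w x y"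
  shows "d x y \<le> jump_size w d"
  using assms unfolding finite_jump_size_def jump_size_def by (auto intro!: cSup_upper)

lemma jump_size_nonneg:
  fixes w d :: "'a \<Rightarrow> 'a \<Rightarrow> real" and x y :: 'a
  assumes "pseudo_metric d" "finite_jump_size w d" "graph_connected w" "x \<noteq> y"
  shows "0 \<le> jump_size w d"
proof -
  have "(\<lambda>a b. 0 < w a b)\<^sup>*\<^sup>* x y"
    using assms(3) unfolding graph_connected_def by blast
  then obtain z where "0 < w x z"
    using assms(4) by (metis converse_rtranclpE)
  then show ?thesis
    using edge_dist_le_jump_size[OF assms(2)] assms(1) unfolding pseudo_metric_def
    by (meson order_trans)
qed

lemma laplacian_eq_finite_sum:
  assumes "\<forall>y. 0 \<le> w x y" "finite E" "{y. 0 < w x y} \<subseteq> E"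
  shows "laplacian w mu f x = (\<Sum>y\<in>E. (f y - f x) * w x y) / mu x"
proof -
  have "(\<Sum>\<^sub>\<infinity>y. (f y - f x) * w x y) = infsum (\<lambda>y. (f y - f x) * w x y) E"
  proof (rule infsum_cong_neutral)
    fix y
    assume "y \<in> UNIV - E"
    then have "w x y = 0"
      using assms(1,3) by (metis DiffD2 less_eq_real_def mem_Collect_eq subsetD)
    then show "(f y - f x) * w x y = 0"
      by simp
  qed auto
  then show ?thesis
    unfolding laplacian_def using assms(2) by simp
qed

lemma intrinsic_finite_sum_le:
  assumes "intrinsic w mu d" "pseudo_metric d" "0 < mu x" "\<forall>y. 0 \<le> w x y" "finite E"
  shows "(\<Sum>y\<in>E. w x y * (d x y)\<^sup>2) \<le> mu x"
proof -
  have summable: "(\<lambda>y. w x y * d x y powr 2) summable_on UNIV"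
    and bound: "(1 / mu x) * (\<Sum>\<^sub>\<infinity>y. w x y * d x y powr 2) \<le> 1"
    using assms(1) unfolding intrinsic_def q_intrinsic_def by auto
  have "\<And>y. d x y powr 2 = (d x y)\<^sup>2"
    using assms(2) unfolding pseudo_metric_def by (simp add: powr_realpow')
  then have "(\<Sum>y\<in>E. w x y * (d x y)\<^sup>2) = (\<Sum>y\<in>E. w x y * d x y powr 2)"
    by simp
  also have "\<dots> \<le> (\<Sum>\<^sub>\<infinity>y. w x y * d x y powr 2)"
    using assms(2,4,5) summable unfolding pseudo_metric_def
    by (intro finite_sum_le_infsum) auto
  also have "\<dots> \<le> mu x"
    using bound assms(3) by (simp add: field_simps)
  finally show ?thesis .
qed

text \<open>Discrete integration by parts against \<open>\<eta>\<^sup>2 v\<close>: the terms for \<open>(x, y)\<close> and \<open>(y, x)\<close>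
  add up to \<open>w(x,y) (v\<^sub>x v\<^sub>y (\<eta>\<^sub>y - \<eta>\<^sub>x)\<^sup>2 - (\<eta>\<^sub>y v\<^sub>y - \<eta>\<^sub>x v\<^sub>x)\<^sup>2)\<close>.\<close>
lemma double_sum_cutoff_le:
  fixes w :: "'a \<Rightarrow> 'a \<Rightarrow> real"
  assumes "\<And>x y. 0 \<le> w x y" "\<And>x y. w x y = w y x"
  shows "(\<Sum>x\<in>E. \<Sum>y\<in>E. w x y * ((\<eta> x)\<^sup>2 * v x * (v y - v x)))
    \<le> (\<Sum>x\<in>E. \<Sum>y\<in>E. w x y * ((v x)\<^sup>2 * (\<eta> y - \<eta> x)\<^sup>2)) / 2"
proof -
  define L where "L x y = w x y * ((\<eta> x)\<^sup>2 * v x * (v y - v x))" for x y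
  define R where "R x y = w x y * ((v x)\<^sup>2 * (\<eta> y - \<eta> x)\<^sup>2)" for x y
  have "L x y + L y x \<le> (R x y + R y x) / 2" for x y
  proof -
    have "L x y + L y x = w x y * ((\<eta> x)\<^sup>2 * v x * (v y - v x) + (\<eta> y)\<^sup>2 * v y * (v x - v y))"
      unfolding L_def by (simp add: assms(2)[of y x] algebra_simps)
    also have "\<dots> = w x y * (v x * v y * (\<eta> y - \<eta> x)\<^sup>2 - (\<eta> y * v y - \<eta> x * v x)\<^sup>2)"
      by (simp add: power2_eq_square algebra_simps)
    also have "\<dots> \<le> w x y * (((v x)\<^sup>2 + (v y)\<^sup>2) / 2 * (\<eta> y - \<eta> x)\<^sup>2)"
    proof (intro mult_left_mono assms(1))
      have "v x * v y \<le> ((v x)\<^sup>2 + (v y)\<^sup>2) / 2"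
        using zero_le_power2[of "v x - v y"] by (simp add: power2_eq_square algebra_simps)
      then show "v x * v y * (\<eta> y - \<eta> x)\<^sup>2 - (\<eta> y * v y - \<eta> x * v x)\<^sup>2
          \<le> ((v x)\<^sup>2 + (v y)\<^sup>2) / 2 * (\<eta> y - \<eta> x)\<^sup>2"
        by (smt (verit) mult_right_mono zero_le_power2)
    qed
    also have "\<dots> = (R x y + R y x) / 2"
      unfolding R_def by (simp add: assms(2)[of y x] power2_commute algebra_simps)
    finally show ?thesis .
  qed
  then have "(\<Sum>x\<in>E. \<Sum>y\<in>E. L x y + L y x) \<le> (\<Sum>x\<in>E. \<Sum>y\<in>E. (R x y + R y x) / 2)"
    by (intro sum_mono)
  moreover have "(\<Sum>x\<in>E. \<Sum>y\<in>E. L x y + L y x) = 2 * (\<Sum>x\<in>E. \<Sum>y\<in>E. L x y)"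
    by (simp add: sum.distrib sum.swap[of "\<lambda>x y. L y x"])
  moreover have "(\<Sum>x\<in>E. \<Sum>y\<in>E. (R x y + R y x) / 2) = (\<Sum>x\<in>E. \<Sum>y\<in>E. R x y)"
    by (simp add: sum.distrib sum.swap[of "\<lambda>x y. R y x"] add_divide_distrib sum_divide_distrib[symmetric])
  ultimately show ?thesis
    unfolding L_def R_def by simp
qed
lemma abs_powr_subsolution:
  fixes w :: "'a \<Rightarrow> 'a \<Rightarrow> real" and q c :: real
  assumes "1 \<le> q" "0 < mu x" "c \<le> V x" "\<forall>y. 0 \<le> w x y" "finite E" "{y. 0 < w x y} \<subseteq> E"
    and "laplacian w mu u x = V x * u x"
  shows "q * c * mu x * (\<bar>u x\<bar> powr q)\<^sup>2
    \<le> \<bar>u x\<bar> powr q * (\<Sum>y\<in>E. w x y * (\<bar>u y\<bar> powr q - \<bar>u x\<bar> powr q))"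
proof -
  define g where "g = sgn (u x) * \<bar>u x\<bar> powr (2 * q - 1)"
  have "g * u x = \<bar>u x\<bar> * \<bar>u x\<bar> powr (2 * q - 1)"
    unfolding g_def by (simp add: sgn_if)
  also have "\<dots> = \<bar>u x\<bar> powr (q + q)"
    by (simp add: powr_mult_base)
  finally have g_mult: "g * u x = (\<bar>u x\<bar> powr q)\<^sup>2"
    by (simp add: power2_eq_square flip: powr_add)
  have sum_eq: "(\<Sum>y\<in>E. (u y - u x) * w x y) = mu x * V x * u x"
    using laplacian_eq_finite_sum[of w x E mu u] assms(2,4-7) by (simp add: field_simps)
  have "q * c * mu x * (\<bar>u x\<bar> powr q)\<^sup>2 \<le> q * V x * mu x * (\<bar>u x\<bar> powr q)\<^sup>2"
    using assms(1-3) by (intro mult_right_mono) auto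
  also have "\<dots> = q * g * (\<Sum>y\<in>E. (u y - u x) * w x y)"
    unfolding sum_eq g_mult[symmetric] by (simp add: ac_simps)
  also have "\<dots> = (\<Sum>y\<in>E. w x y * (q * g * (u y - u x)))"
    by (simp add: sum_distrib_left algebra_simps)
  also have "\<dots> \<le> (\<Sum>y\<in>E. w x y * (\<bar>u x\<bar> powr q * (\<bar>u y\<bar> powr q - \<bar>u x\<bar> powr q)))"
    using sgn_powr_mult_diff_le[OF assms(1), of "u x"] assms(4)
    unfolding g_def by (intro sum_mono mult_left_mono) (auto simp: mult.assoc)
  also have "\<dots> = \<bar>u x\<bar> powr q * (\<Sum>y\<in>E. w x y * (\<bar>u y\<bar> powr q - \<bar>u x\<bar> powr q))"
    by (simp add: sum_distrib_left algebra_simps)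
  finally show ?thesis .
qed

text \<open>Sums over any finite set containing the neighbours of \<open>x\<close> stand for the Laplacian at \<open>x\<close>,
  so the assumption \<open>subsolution\<close> reads \<open>lam v\<^sup>2 \<le> v \<Delta>v\<close>.\<close>
locale exp_weighted_subsolution =
  fixes w :: "'a \<Rightarrow> 'a \<Rightarrow> real" and mu v :: "'a \<Rightarrow> real" and d :: "'a \<Rightarrow> 'a \<Rightarrow> real"
    and x0 :: 'a and \<beta> s lam :: real
  assumes w_nonneg: "\<And>x y. 0 \<le> w x y"
    and w_sym: "\<And>x y. w x y = w y x"
    and mu_pos: "\<And>x. 0 < mu x"
    and pseudo_metric: "pseudo_metric d"
    and intrinsic: "intrinsic w mu d"
    and edge_dist_le: "\<And>x y. 0 < w x y \<Longrightarrow> d x y \<le> s"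
    and s_nonneg: "0 \<le> s"
    and finite_balls: "\<And>x r. 0 < r \<Longrightarrow> finite (ball_d d x r)"
    and subsolution: "\<And>x E. finite E \<Longrightarrow> {y. 0 < w x y} \<subseteq> E \<Longrightarrow>
      lam * mu x * (v x)\<^sup>2 \<le> v x * (\<Sum>y\<in>E. w x y * (v y - v x))"
    and \<beta>_pos: "0 < \<beta>"
    and lam_gt: "\<beta>\<^sup>2 * exp (\<beta> * s) / 8 < lam"
    and weighted_summable: "(\<lambda>x. (v x)\<^sup>2 * exp (- \<beta> * d x x0) * mu x) summable_on UNIV"
begin

lemma lam_pos: "0 < lam"
proof -
  have "0 \<le> \<beta>\<^sup>2 * exp (\<beta> * s) / 8"
    by simp
  then show ?thesis
    using lam_gt by linarith
qed

lemma cutoff_neighbour_in_ball: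
  assumes "exp_cutoff \<beta> d x0 R x \<noteq> 0" "0 < w x y"
  shows "y \<in> ball_d d x0 (R + s + 1)"
proof -
  have "d x x0 < R" "d x y \<le> s"
    using exp_cutoff_nonzero_imp_dist_less[OF \<beta>_pos assms(1)] edge_dist_le[OF assms(2)] .
  moreover have "d y x0 \<le> d y x + d x x0" "d y x = d x y"
    using pseudo_metric unfolding pseudo_metric_def by metis+
  ultimately show ?thesis
    unfolding ball_d_def by auto
qed

lemma cutoff_energy_le:
  assumes "0 < R"
  shows "lam * (\<Sum>x\<in>ball_d d x0 (R + s + 1). (exp_cutoff \<beta> d x0 R x)\<^sup>2 * mu x * (v x)\<^sup>2)
    \<le> \<beta>\<^sup>2 * exp (\<beta> * s) / 8 * (\<Sum>\<^sub>\<infinity>x. (v x)\<^sup>2 * exp (- \<beta> * d x x0) * mu x)"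
proof -
  define E where "E = ball_d d x0 (R + s + 1)"
  define \<eta> where "\<eta> = exp_cutoff \<beta> d x0 R"
  define K where "K = \<beta>\<^sup>2 * exp (\<beta> * s) / 4"
  have E: "finite E"
    unfolding E_def using finite_balls assms s_nonneg by simp
  have "lam * (\<Sum>x\<in>E. (\<eta> x)\<^sup>2 * mu x * (v x)\<^sup>2) = (\<Sum>x\<in>E. (\<eta> x)\<^sup>2 * (lam * mu x * (v x)\<^sup>2))"
    by (simp add: sum_distrib_left ac_simps)
  also have "\<dots> \<le> (\<Sum>x\<in>E. (\<eta> x)\<^sup>2 * (v x * (\<Sum>y\<in>E. w x y * (v y - v x))))"
  proof (rule sum_mono)
    fix x
    show "(\<eta> x)\<^sup>2 * (lam * mu x * (v x)\<^sup>2) \<le> (\<eta> x)\<^sup>2 * (v x * (\<Sum>y\<in>E. w x y * (v y - v x)))"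
    proof (cases "\<eta> x = 0")
      case False
      then have "{y. 0 < w x y} \<subseteq> E"
        using cutoff_neighbour_in_ball unfolding E_def \<eta>_def by blast
      then show ?thesis
        by (intro mult_left_mono subsolution[OF E]) simp_all
    qed simp
  qed
  also have "\<dots> = (\<Sum>x\<in>E. \<Sum>y\<in>E. w x y * ((\<eta> x)\<^sup>2 * v x * (v y - v x)))"
    by (simp add: sum_distrib_left ac_simps)
  also have "\<dots> \<le> (\<Sum>x\<in>E. \<Sum>y\<in>E. w x y * ((v x)\<^sup>2 * (\<eta> y - \<eta> x)\<^sup>2)) / 2"
    by (rule double_sum_cutoff_le[OF w_nonneg w_sym])
  also have "\<dots> \<le> (\<Sum>x\<in>E. (v x)\<^sup>2 * (K * exp (- \<beta> * d x x0) * mu x)) / 2"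
  proof (intro divide_right_mono sum_mono)
    fix x
    have "(\<Sum>y\<in>E. w x y * (\<eta> y - \<eta> x)\<^sup>2) \<le> (\<Sum>y\<in>E. w x y * (K * exp (- \<beta> * d x x0) * (d x y)\<^sup>2))"
    proof (rule sum_mono)
      fix y
      show "w x y * (\<eta> y - \<eta> x)\<^sup>2 \<le> w x y * (K * exp (- \<beta> * d x x0) * (d x y)\<^sup>2)"
      proof (cases "0 < w x y")
        case True
        then show ?thesis
          unfolding \<eta>_def K_def using exp_cutoff_diff_sq_le[OF pseudo_metric _ edge_dist_le[OF True]] \<beta>_pos
          by (intro mult_left_mono) auto
      next
        case False
        then show ?thesis
          using w_nonneg[of x y] by simp
      qed
    qed
    also have "\<dots> = K * exp (- \<beta> * d x x0) * (\<Sum>y\<in>E. w x y * (d x y)\<^sup>2)"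
      by (simp add: sum_distrib_left ac_simps)
    also have "\<dots> \<le> K * exp (- \<beta> * d x x0) * mu x"
      using intrinsic_finite_sum_le[OF intrinsic pseudo_metric mu_pos] w_nonneg E
      by (intro mult_left_mono) (auto simp: K_def)
    finally have "(v x)\<^sup>2 * (\<Sum>y\<in>E. w x y * (\<eta> y - \<eta> x)\<^sup>2) \<le> (v x)\<^sup>2 * (K * exp (- \<beta> * d x x0) * mu x)"
      by (rule mult_left_mono) simp
    then show "(\<Sum>y\<in>E. w x y * ((v x)\<^sup>2 * (\<eta> y - \<eta> x)\<^sup>2)) \<le> (v x)\<^sup>2 * (K * exp (- \<beta> * d x x0) * mu x)"
      by (simp add: sum_distrib_left ac_simps)
  qed simp
  also have "\<dots> = K / 2 * (\<Sum>x\<in>E. (v x)\<^sup>2 * exp (- \<beta> * d x x0) * mu x)"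
    by (simp add: sum_distrib_left ac_simps)
  also have "\<dots> \<le> K / 2 * (\<Sum>\<^sub>\<infinity>x. (v x)\<^sup>2 * exp (- \<beta> * d x x0) * mu x)"
    using weighted_summable E mu_pos
    by (intro mult_left_mono finite_sum_le_infsum) (auto simp: K_def less_imp_le)
  finally show ?thesis
    unfolding E_def \<eta>_def K_def by simp
qed

lemma finite_weighted_sum_le:
  assumes "finite A"
  shows "lam * (\<Sum>x\<in>A. (v x)\<^sup>2 * exp (- \<beta> * d x x0) * mu x)
    \<le> \<beta>\<^sup>2 * exp (\<beta> * s) / 8 * (\<Sum>\<^sub>\<infinity>x. (v x)\<^sup>2 * exp (- \<beta> * d x x0) * mu x)"
    (is "_ \<le> ?bound")
proof -
  define g where "g R x = (exp_cutoff \<beta> d x0 R x)\<^sup>2 * mu x * (v x)\<^sup>2" for R x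
  have g_nonneg: "0 \<le> g R x" for R x
    unfolding g_def using mu_pos[of x] by simp
  have "((\<lambda>R. lam * sum (g R) A) \<longlongrightarrow> lam * (\<Sum>x\<in>A. (exp (- \<beta> * d x x0 / 2))\<^sup>2 * mu x * (v x)\<^sup>2)) at_top"
    unfolding g_def by (intro tendsto_intros exp_cutoff_tendsto \<beta>_pos)
  moreover have "\<forall>\<^sub>F R in at_top. lam * sum (g R) A \<le> ?bound"
    using eventually_gt_at_top[of 0]
  proof eventually_elim
    case (elim R)
    define E where "E = ball_d d x0 (R + s + 1)"
    have "sum (g R) A = sum (g R) (A \<inter> E)"
    proof (rule sum.mono_neutral_right)
      show "\<forall>x\<in>A - A \<inter> E. g R x = 0"
        using exp_cutoff_nonzero_imp_dist_less[OF \<beta>_pos] s_nonneg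
        unfolding g_def E_def ball_d_def by force
    qed (use assms in auto)
    also have "\<dots> \<le> sum (g R) E"
      using finite_balls elim s_nonneg g_nonneg unfolding E_def by (intro sum_mono2) auto
    finally have "lam * sum (g R) A \<le> lam * sum (g R) E"
      using lam_pos by (simp add: mult_left_mono)
    also have "\<dots> \<le> ?bound"
      unfolding g_def E_def by (rule cutoff_energy_le[OF elim])
    finally show ?case .
  qed
  ultimately have "lam * (\<Sum>x\<in>A. (exp (- \<beta> * d x x0 / 2))\<^sup>2 * mu x * (v x)\<^sup>2) \<le> ?bound"
    by (rule tendsto_upperbound) simp
  moreover have "(exp (- \<beta> * d x x0 / 2))\<^sup>2 = exp (- \<beta> * d x x0)" for x
    by (simp add: power2_eq_square flip: exp_add)
  ultimately show ?thesis
    by (simp add: ac_simps)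
qed

theorem vanishes: "v x = 0"
proof -
  define f where "f x = (v x)\<^sup>2 * exp (- \<beta> * d x x0) * mu x" for x
  define K where "K = \<beta>\<^sup>2 * exp (\<beta> * s) / 8"
  have K_lt: "K < lam"
    unfolding K_def by (rule lam_gt)
  have f_nonneg: "0 \<le> f x" for x
    unfolding f_def using mu_pos[of x] by simp
  have f_summable: "f summable_on UNIV"
    unfolding f_def by (rule weighted_summable)
  have "lam * sum f F \<le> K * infsum f UNIV" if "finite F" for F
    unfolding f_def K_def using finite_weighted_sum_le[OF that] .
  then have "infsum f UNIV \<le> K * infsum f UNIV / lam"
    using lam_pos by (intro infsum_le_finite_sums[OF f_summable]) (simp add: field_simps)
  then have contract: "lam * infsum f UNIV \<le> K * infsum f UNIV"
    using lam_pos by (simp add: field_simps)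
  have "infsum f UNIV \<le> 0"
  proof (rule ccontr)
    assume "\<not> infsum f UNIV \<le> 0"
    then have "K * infsum f UNIV < lam * infsum f UNIV"
      using K_lt by (intro mult_strict_right_mono) auto
    then show False
      using contract by linarith
  qed
  then have "f x = 0"
    using f_summable f_nonneg by (rule nonneg_infsum_le_0D) simp_all
  then show ?thesis
    unfolding f_def using mu_pos[of x] by simp
qed

end

lemma exp_weighted_subsolution_abs_powr:
  fixes w d :: "'a \<Rightarrow> 'a \<Rightarrow> real" and q c :: real
  assumes "weighted_graph w mu" "pseudo_metric d" "intrinsic w mu d"
    and "finite_jump_size w d" "0 \<le> jump_size w d"
    and "\<forall>x r. r > 0 \<longrightarrow> finite (ball_d d x r)"
    and "\<forall>x. c \<le> V x" "\<forall>x. laplacian w mu u x = V x * u x"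
    and "1 \<le> q" "0 < \<beta>" "\<beta>\<^sup>2 * exp (\<beta> * jump_size w d) / 8 < q * c"
    and "(\<lambda>x. \<bar>u x\<bar> powr (2 * q) * exp (- \<beta> * d x x0) * mu x) summable_on UNIV"
  shows "exp_weighted_subsolution w mu (\<lambda>x. \<bar>u x\<bar> powr q) d x0 \<beta> (jump_size w d) (q * c)"
proof -
  have mu_pos: "\<And>x. 0 < mu x" and w_nonneg: "\<And>x y. 0 \<le> w x y" and w_sym: "\<And>x y. w x y = w y x"
    using assms(1) unfolding weighted_graph_def by auto
  have edge_dist_le: "\<And>x y. 0 < w x y \<Longrightarrow> d x y \<le> jump_size w d"
    using assms(4) by (rule edge_dist_le_jump_size)
  have finite_balls: "\<And>x r. 0 < r \<Longrightarrow> finite (ball_d d x r)"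
    using assms(6) by blast
  have subsolution: "q * c * mu x * (\<bar>u x\<bar> powr q)\<^sup>2
      \<le> \<bar>u x\<bar> powr q * (\<Sum>y\<in>E. w x y * (\<bar>u y\<bar> powr q - \<bar>u x\<bar> powr q))"
    if "finite E" "{y. 0 < w x y} \<subseteq> E" for x E
    by (intro abs_powr_subsolution[where V = V]) (use assms(7-9) mu_pos w_nonneg that in auto)
  have "(\<bar>u x\<bar> powr q)\<^sup>2 = \<bar>u x\<bar> powr (2 * q)" for x
    by (simp add: power2_eq_square flip: powr_add)
  then have summable: "(\<lambda>x. (\<bar>u x\<bar> powr q)\<^sup>2 * exp (- \<beta> * d x x0) * mu x) summable_on UNIV"
    using assms(12) by simp
  show ?thesis
    by unfold_locales
      (fact w_nonneg w_sym mu_pos assms(2,3,5,10,11) edge_dist_le finite_balls subsolution summable)+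
qed

theorem theorem3p1:
  fixes w :: "'a \<Rightarrow> 'a \<Rightarrow> real" and mu :: "'a \<Rightarrow> real" and d :: "'a \<Rightarrow> 'a \<Rightarrow> real"
    and V u :: "'a \<Rightarrow> real" and p \<beta> c0 s :: real and x0 :: 'a
  assumes "weighted_graph w mu"
    and "infinite (UNIV :: 'a set)"
    and "graph_connected w"
    and "pseudo_metric d"
    and "intrinsic w mu d"
    and "finite_jump_size w d"
    and "s = jump_size w d"
    and "\<forall>x r. r > 0 \<longrightarrow> finite (ball_d d x r)"
    and "bdd_below (range V)"
    and "c0 = Inf (range V)"
    and "c0 > 0"
    and "\<forall>x. laplacian w mu u x - V x * u x = 0"
    and "p \<ge> 2" and "\<beta> > 0"
    and "\<beta>\<^sup>2 * exp (2 * s * \<beta>) < 2 * c0 * p"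
    and "lp_weighted p (\<lambda>x. exp (- \<beta> * d x x0)) mu u"
  shows "\<forall>x. u x = 0"
proof -
  obtain x :: 'a where "x \<noteq> undefined"
    using ex_new_if_finite[OF assms(2), of "{undefined}"] by blast
  then have s_nonneg: "0 \<le> s"
    unfolding assms(7) by (rule jump_size_nonneg[OF assms(4,6,3)])
  define q where "q = p / 2"
  have "\<beta>\<^sup>2 * exp (\<beta> * s) \<le> \<beta>\<^sup>2 * exp (2 * s * \<beta>)"
    using s_nonneg assms(14) by (intro mult_left_mono) auto
  moreover have "0 < c0 * p"
    using assms(11,13) by simp
  ultimately have "\<beta>\<^sup>2 * exp (\<beta> * s) / 8 < q * c0"
    using assms(15) unfolding q_def by (simp add: field_simps mult.commute mult.left_commute)
  moreover have "\<forall>x. c0 \<le> V x"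
    using assms(9,10) by (simp add: cInf_lower)
  moreover have "\<forall>x. laplacian w mu u x = V x * u x"
    using assms(12) by simp
  moreover have "1 \<le> q" "2 * q = p"
    unfolding q_def using assms(13) by simp_all
  ultimately interpret exp_weighted_subsolution w mu "\<lambda>x. \<bar>u x\<bar> powr q" d x0 \<beta> s "q * c0"
    using assms(1,4-6,8,14,16) s_nonneg unfolding lp_weighted_def assms(7)
    by (intro exp_weighted_subsolution_abs_powr[where V = V]) simp_all
  show ?thesis
    using vanishes by simp
qed

end
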